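(* Let $m>2$ be odd and $n$ a positive integer. Then $O(m)$ divides $P(m,n)$.
   Context: For odd $m>2$, $O(m)$ is the multiplicative order of $2$ modulo $m$ (the least positive $k$ with $2^k\equiv1\pmod m$). For positive integers $m,n$, let $\mathbf{Z}_m$ be the integers modulo $m$ and $T:\mathbf{Z}_m^n\to\mathbf{Z}_m^n$, $T(a_0,\dots,a_{n-1})=(a_0+a_1,a_1+a_2,\dots,a_{n-1}+a_0)$. For $\mathbf{a}\in\mathbf{Z}_m^n$ the cycle length of $(T^k\mathbf{a})_{k\ge0}$ is the smallest positive integer $P$ such that there is $N$ with $T^{k+P}\mathbf{a}=T^k\mathbf{a}$ for all $k\ge N$. $P(m,n)$ denotes the maximum of these cycle lengths over all $\mathbf{a}\in\mathbf{Z}_m^n$. *)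

theory Defs
  imports "HOL-Number_Theory.Number_Theory"
begin

text \<open>Elements of Z_m^n are represented as functions nat => int whose values at
indices i < n lie in {0..<m} (canonical residues) and which vanish at i >= n.\<close>

definition ducci_vecs :: "nat \<Rightarrow> nat \<Rightarrow> (nat \<Rightarrow> int) set" where
  "ducci_vecs m n = {a. (\<forall>i<n. 0 \<le> a i \<and> a i < int m) \<and> (\<forall>i\<ge>n. a i = 0)}"

definition ducciT :: "nat \<Rightarrow> nat \<Rightarrow> (nat \<Rightarrow> int) \<Rightarrow> (nat \<Rightarrow> int)" where
  "ducciT m n a = (\<lambda>i. if i < n then (a i + a (Suc i mod n)) mod int m else 0)"

definition cycle_len :: "nat \<Rightarrow> nat \<Rightarrow> (nat \<Rightarrow> int) \<Rightarrow> nat" where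
  "cycle_len m n a = (LEAST P. 0 < P \<and>
     (\<exists>N. \<forall>k\<ge>N. (ducciT m n ^^ (k + P)) a = (ducciT m n ^^ k) a))"

definition Pmax :: "nat \<Rightarrow> nat \<Rightarrow> nat" where
  "Pmax m n = Max (cycle_len m n ` ducci_vecs m n)"

definition Ord2 :: "nat \<Rightarrow> nat" where
  "Ord2 m = ord m 2"

end

theory Submission
  imports Defs
begin

text \<open>The Ducci map is linear over \<open>\<int>/m\<close> and commutes with cyclic shifts, so every orbit is a
convolution of the starting vector with the orbit of the unit impulse \<open>(1,0,\<dots>,0)\<close>.
Hence any eventual period of the impulse is an eventual period of every vector, and \<open>P(m,n)\<close>
is the cycle length of the impulse. In particular \<open>P(m,n)\<close> is an eventual period of the
all-ones vector, whose orbit is \<open>(2\<^sup>k,\<dots>,2\<^sup>k)\<close>; as \<open>2\<close> is a unit modulo the odd \<open>m\<close>,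
\<open>2\<^bsup>P(m,n)\<^esup> \<equiv> 1 (mod m)\<close>.\<close>

definition eventual_period :: "('a \<Rightarrow> 'a) \<Rightarrow> 'a \<Rightarrow> nat \<Rightarrow> bool" where
  "eventual_period f a P \<longleftrightarrow> 0 < P \<and> (\<exists>N. \<forall>k\<ge>N. (f ^^ (k + P)) a = (f ^^ k) a)"

lemma funpow_eq_imp_eventual_period:
  assumes "i < j" and "(f ^^ i) a = (f ^^ j) a"
  shows "eventual_period f a (j - i)"
  unfolding eventual_period_def
proof (intro conjI exI allI impI)
  show "0 < j - i" using assms(1) by simp
  fix k assume "i \<le> k"
  have "(f ^^ (k + (j - i))) a = (f ^^ (k - i + j)) a"
    using \<open>i \<le> k\<close> assms(1) by (simp add: algebra_simps)
  also have "\<dots> = (f ^^ (k - i)) ((f ^^ j) a)"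
    by (simp only: funpow_add comp_apply)
  also have "\<dots> = (f ^^ (k - i)) ((f ^^ i) a)"
    using assms(2) by simp
  also have "\<dots> = (f ^^ (k - i + i)) a"
    by (simp only: funpow_add comp_apply)
  also have "\<dots> = (f ^^ k) a"
    using \<open>i \<le> k\<close> by simp
  finally show "(f ^^ (k + (j - i))) a = (f ^^ k) a" .
qed

lemma eventual_period_exists:
  assumes "finite S" and "f ` S \<subseteq> S" and "a \<in> S"
  shows "\<exists>P. eventual_period f a P"
proof -
  have "range (\<lambda>k. (f ^^ k) a) \<subseteq> S"
  proof safe
    fix k show "(f ^^ k) a \<in> S"
      using assms(2,3) by (induction k) auto
  qed
  then have "\<not> inj (\<lambda>k. (f ^^ k) a)"
    using assms(1) finite_imageD finite_subset infinite_UNIV_nat by blast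
  then obtain i j where "i \<noteq> j" and eq: "(f ^^ i) a = (f ^^ j) a"
    unfolding inj_def by blast
  then consider "i < j" | "j < i"
    by linarith
  then show ?thesis
  proof cases
    case 1
    then show ?thesis using funpow_eq_imp_eventual_period[OF _ eq] by blast
  next
    case 2
    then show ?thesis using funpow_eq_imp_eventual_period[OF _ eq[symmetric]] by blast
  qed
qed

lemma cycle_len_eq_Least: "cycle_len m n a = (LEAST P. eventual_period (ducciT m n) a P)"
  unfolding cycle_len_def eventual_period_def ..

lemma ducciT_in_ducci_vecs:
  assumes "a \<in> ducci_vecs m n" and "m > 0"
  shows "ducciT m n a \<in> ducci_vecs m n"
  using assms by (auto simp: ducci_vecs_def ducciT_def)

lemma funpow_ducciT_in_ducci_vecs:
  assumes "a \<in> ducci_vecs m n" and "m > 0"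
  shows "(ducciT m n ^^ k) a \<in> ducci_vecs m n"
  using assms by (induction k) (auto intro: ducciT_in_ducci_vecs)

lemma finite_ducci_vecs: "finite (ducci_vecs m n)"
proof (rule finite_subset)
  show "ducci_vecs m n \<subseteq>
      {f. \<forall>x. (x \<in> {..<n} \<longrightarrow> f x \<in> {0..<int m}) \<and> (x \<notin> {..<n} \<longrightarrow> f x = 0)}"
    by (auto simp: ducci_vecs_def)
  show "finite {f. \<forall>x. (x \<in> {..<n} \<longrightarrow> f x \<in> {0..<int m}) \<and> (x \<notin> {..<n} \<longrightarrow> f x = (0::int))}"
    by (rule finite_set_of_finite_funs) auto
qed

lemma cycle_len_eventual_period:
  assumes "a \<in> ducci_vecs m n" and "m > 0"
  shows "eventual_period (ducciT m n) a (cycle_len m n a)"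
proof -
  have "ducciT m n ` ducci_vecs m n \<subseteq> ducci_vecs m n"
    using ducciT_in_ducci_vecs assms(2) by blast
  then have "\<exists>P. eventual_period (ducciT m n) a P"
    using eventual_period_exists[OF finite_ducci_vecs] assms(1) by blast
  then show ?thesis
    unfolding cycle_len_eq_Least by (rule LeastI_ex)
qed

lemma cycle_len_le:
  "eventual_period (ducciT m n) a P \<Longrightarrow> cycle_len m n a \<le> P"
  unfolding cycle_len_eq_Least by (rule Least_le)

definition impulse :: "nat \<Rightarrow> int" where
  "impulse = (\<lambda>i. if i = 0 then 1 else 0)"

definition ones_vec :: "nat \<Rightarrow> nat \<Rightarrow> int" where
  "ones_vec n = (\<lambda>i. if i < n then 1 else 0)"

lemma impulse_in_ducci_vecs: "m > 1 \<Longrightarrow> n > 0 \<Longrightarrow> impulse \<in> ducci_vecs m n"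
  by (auto simp: ducci_vecs_def impulse_def)

lemma ones_vec_in_ducci_vecs: "m > 1 \<Longrightarrow> ones_vec n \<in> ducci_vecs m n"
  by (auto simp: ducci_vecs_def ones_vec_def)

lemma shift_mod_eq_0_iff:
  fixes i j n :: nat
  assumes "i < n" and "j < n"
  shows "(i + n - j) mod n = 0 \<longleftrightarrow> j = i"
proof (cases "j \<le> i")
  case True
  then have shift: "i + n - j = (i - j) + n"
    by simp
  have "(i + n - j) mod n = i - j"
    unfolding shift using assms(1) by simp
  then show ?thesis using True by auto
next
  case False
  then show ?thesis using assms by simp
qed

lemma shift_mod_Suc:
  fixes i j n :: nat
  assumes "i < n" and "j < n"
  shows "(Suc i mod n + n - j) mod n = Suc ((i + n - j) mod n) mod n"
proof -
  have "(Suc i mod n + n - j) mod n = (Suc i mod n + (n - j)) mod n"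
    using assms by simp
  also have "\<dots> = Suc (i + (n - j)) mod n"
    by (simp add: mod_add_left_eq)
  also have "\<dots> = Suc ((i + n - j) mod n) mod n"
    using assms by (simp add: mod_Suc_eq)
  finally show ?thesis .
qed

lemma sum_mult_mod_right_eq:
  fixes a X :: "nat \<Rightarrow> int"
  shows "(\<Sum>j\<in>A. a j * (X j mod M)) mod M = (\<Sum>j\<in>A. a j * X j) mod M"
proof -
  have "(\<Sum>j\<in>A. a j * (X j mod M)) mod M = (\<Sum>j\<in>A. (a j * (X j mod M)) mod M) mod M"
    by (rule mod_sum_eq[symmetric])
  also have "\<dots> = (\<Sum>j\<in>A. (a j * X j) mod M) mod M"
    by (simp only: mod_mult_right_eq)
  also have "\<dots> = (\<Sum>j\<in>A. a j * X j) mod M"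
    by (rule mod_sum_eq)
  finally show ?thesis .
qed

text \<open>The index \<open>(i + n - j) mod n\<close> is \<open>i - j\<close> modulo \<open>n\<close>, written so that no natural-number
subtraction truncates.\<close>

lemma funpow_ducciT_convolution:
  assumes "a \<in> ducci_vecs m n" and "i < n"
  shows "(ducciT m n ^^ k) a i =
     (\<Sum>j<n. a j * (ducciT m n ^^ k) impulse ((i + n - j) mod n)) mod int m"
  using assms(2)
proof (induction k arbitrary: i)
  case 0
  have "(\<Sum>j<n. a j * impulse ((i + n - j) mod n)) = (\<Sum>j<n. if j = i then a j else 0)"
    using 0 by (intro sum.cong) (auto simp: impulse_def shift_mod_eq_0_iff)
  then show ?case
    using assms(1) 0 by (simp add: ducci_vecs_def)
next
  case (Suc k)
  define g where "g = (ducciT m n ^^ k) impulse"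
  define s where "s j = (i + n - j) mod n" for j
  have "n > 0" using Suc.prems by simp
  have s_Suc: "(Suc i mod n + n - j) mod n = Suc (s j) mod n" if "j < n" for j
    unfolding s_def using shift_mod_Suc[OF Suc.prems that] .
  have step: "(ducciT m n ^^ Suc k) impulse (s j) = (g (s j) + g (Suc (s j) mod n)) mod int m" for j
    using \<open>n > 0\<close> by (simp add: ducciT_def g_def s_def)
  have IH_i: "(ducciT m n ^^ k) a i = (\<Sum>j<n. a j * g (s j)) mod int m"
    using Suc.IH[OF Suc.prems] unfolding g_def s_def .
  have "(ducciT m n ^^ k) a (Suc i mod n) =
      (\<Sum>j<n. a j * g ((Suc i mod n + n - j) mod n)) mod int m"
    using Suc.IH[of "Suc i mod n"] \<open>n > 0\<close> unfolding g_def by simp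
  also have "\<dots> = (\<Sum>j<n. a j * g (Suc (s j) mod n)) mod int m"
    using s_Suc by (intro arg_cong[where f = "\<lambda>x. x mod int m"] sum.cong) simp_all
  finally have IH_Suc: "(ducciT m n ^^ k) a (Suc i mod n) = \<dots>" .
  have "(ducciT m n ^^ Suc k) a i =
      ((ducciT m n ^^ k) a i + (ducciT m n ^^ k) a (Suc i mod n)) mod int m"
    using Suc.prems by (simp add: ducciT_def)
  also have "\<dots> = ((\<Sum>j<n. a j * g (s j)) + (\<Sum>j<n. a j * g (Suc (s j) mod n))) mod int m"
    unfolding IH_i IH_Suc by (rule mod_add_eq)
  also have "\<dots> = (\<Sum>j<n. a j * (g (s j) + g (Suc (s j) mod n))) mod int m"
    by (simp only: sum.distrib distrib_left)
  also have "\<dots> = (\<Sum>j<n. a j * (ducciT m n ^^ Suc k) impulse (s j)) mod int m"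
    unfolding step by (rule sum_mult_mod_right_eq[symmetric])
  finally show ?case unfolding s_def .
qed

lemma eventual_period_impulse_imp:
  assumes "eventual_period (ducciT m n) impulse P"
    and "a \<in> ducci_vecs m n" and "m > 0"
  shows "eventual_period (ducciT m n) a P"
proof -
  from assms(1) obtain N where "0 < P"
    and N: "\<forall>k\<ge>N. (ducciT m n ^^ (k + P)) impulse = (ducciT m n ^^ k) impulse"
    unfolding eventual_period_def by blast
  have "(ducciT m n ^^ (k + P)) a = (ducciT m n ^^ k) a" if "k \<ge> N" for k
  proof
    fix i
    show "(ducciT m n ^^ (k + P)) a i = (ducciT m n ^^ k) a i"
    proof (cases "i < n")
      case True
      have "(ducciT m n ^^ (k + P)) impulse = (ducciT m n ^^ k) impulse"
        using N that by blast
      then show ?thesis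
        unfolding funpow_ducciT_convolution[OF assms(2) True] by simp
    next
      case False
      then show ?thesis
        using funpow_ducciT_in_ducci_vecs[OF assms(2,3)] by (simp add: ducci_vecs_def)
    qed
  qed
  then show ?thesis
    using \<open>0 < P\<close> unfolding eventual_period_def by blast
qed

lemma Pmax_eq_cycle_len_impulse:
  assumes "m > 1" and "n > 0"
  shows "Pmax m n = cycle_len m n impulse"
  unfolding Pmax_def
proof (rule Max_eqI)
  show "finite (cycle_len m n ` ducci_vecs m n)"
    using finite_ducci_vecs by (rule finite_imageI)
  show "cycle_len m n impulse \<in> cycle_len m n ` ducci_vecs m n"
    using impulse_in_ducci_vecs[OF assms] by (rule imageI)
  have period: "eventual_period (ducciT m n) impulse (cycle_len m n impulse)"
    using cycle_len_eventual_period impulse_in_ducci_vecs assms by simp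
  show "y \<le> cycle_len m n impulse" if "y \<in> cycle_len m n ` ducci_vecs m n" for y
  proof -
    from that obtain a where a: "a \<in> ducci_vecs m n" and y: "y = cycle_len m n a"
      by blast
    have "eventual_period (ducciT m n) a (cycle_len m n impulse)"
      using eventual_period_impulse_imp[OF period a] assms(1) by simp
    then show ?thesis
      unfolding y by (rule cycle_len_le)
  qed
qed

lemma funpow_ducciT_ones_vec:
  assumes "m > 1" and "n > 0"
  shows "(ducciT m n ^^ k) (ones_vec n) = (\<lambda>i. if i < n then 2 ^ k mod int m else 0)"
proof (induction k)
  case 0
  show ?case
    using assms(1) by (auto simp: ones_vec_def)
next
  case (Suc k)
  have double: "(2 ^ k mod int m + 2 ^ k mod int m) mod int m = 2 ^ Suc k mod int m"
    by (simp only: mod_add_eq power_Suc mult_2)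
  have "(ducciT m n ^^ Suc k) (ones_vec n) =
      ducciT m n (\<lambda>i. if i < n then 2 ^ k mod int m else 0)"
    using Suc.IH by simp
  also have "\<dots> = (\<lambda>i. if i < n then (2 ^ k mod int m + 2 ^ k mod int m) mod int m else 0)"
    using assms(2) by (auto simp: ducciT_def)
  also have "\<dots> = (\<lambda>i. if i < n then 2 ^ Suc k mod int m else 0)"
    by (simp only: double)
  finally show ?case .
qed

lemma ord_dvd_eventual_period_ones_vec:
  assumes "odd m" and "m > 1" and "n > 0"
    and "eventual_period (ducciT m n) (ones_vec n) P"
  shows "ord m 2 dvd P"
proof -
  from assms(4) obtain N
    where "(ducciT m n ^^ (N + P)) (ones_vec n) = (ducciT m n ^^ N) (ones_vec n)"
    unfolding eventual_period_def by blast
  then have "(ducciT m n ^^ (N + P)) (ones_vec n) 0 = (ducciT m n ^^ N) (ones_vec n) 0"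
    by simp
  then have "[2 ^ N * 2 ^ P = 2 ^ N * 1] (mod int m)"
    using assms(3) by (simp add: funpow_ducciT_ones_vec[OF assms(2,3)] cong_def power_add)
  moreover have "coprime ((2::int) ^ N) (int m)"
    using assms(1) by (simp add: coprime_commute)
  ultimately have "[(2::int) ^ P = 1] (mod int m)"
    using cong_mult_lcancel by blast
  then have "[2 ^ P = 1] (mod m)"
    by (metis cong_int_iff of_nat_1 of_nat_numeral of_nat_power)
  then show ?thesis
    by (simp only: ord_divides)
qed

theorem proposition4p3:
  fixes m n :: nat
  assumes "odd m" and "m > 2" and "n > 0"
  shows "Ord2 m dvd Pmax m n"
proof -
  have "m > 1"
    using assms(2) by simp
  have "eventual_period (ducciT m n) impulse (cycle_len m n impulse)"
    using cycle_len_eventual_period impulse_in_ducci_vecs \<open>m > 1\<close> assms(3) by simp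
  then have "eventual_period (ducciT m n) (ones_vec n) (cycle_len m n impulse)"
    using eventual_period_impulse_imp ones_vec_in_ducci_vecs \<open>m > 1\<close> by simp
  then have "ord m 2 dvd cycle_len m n impulse"
    using ord_dvd_eventual_period_ones_vec assms(1,3) \<open>m > 1\<close> by blast
  then show ?thesis
    unfolding Ord2_def Pmax_eq_cycle_len_impulse[OF \<open>m > 1\<close> assms(3)] .
qed

end
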